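(* Let $T=\inf\{t\ge0: p_t<p\}$ be the first time at which ${\sf PEAR}$ recommends two popular items. Conditional on $V_{\sf N}=(1-p)/p$, $T$ has the same distribution as $N(\rho_1,c)$; conditional on $V_{\sf N}=-1$, $T$ has the same distribution as $N(\rho_2,c)$. (In particular, ${\sf PEAR}$ recommends one popular and one niche item at times $0,\dots,T-1$ and two popular items at all times $t\ge T$.)
   Context: Model. Time $t=0,1,2,\dots$. Two item types, popular ${\sf P}$ and niche ${\sf N}$, infinitely many items each; at each time $t$ the platform recommends a set of two fresh items of chosen types. Utility of item $i$: $u_i=V_{\tau(i)}+\epsilon_i$; outside option: $u_\emptyset=\epsilon_\emptyset$; all noises i.i.d. Gumbel with scale $1$ and mean $0$. User chooses the utility-maximizing option among the recommended items and the outside option. $V_{\sf P}\ge0$ is a known constant; $V_{\sf N}$ is drawn once, fixed over time, independent of noise, with $\mathbb P(V_{\sf N}=(1-p)/p)=p$, $\mathbb P(V_{\sf N}=-1)=1-p$, $p\in(0,1)$. Constants: $\rho_1=\frac{e^{(1-p)/p}}{1+e^{V_{\sf P}}+e^{(1-p)/p}}$, $\rho_2=\frac{e^{-1}}{1+e^{V_{\sf P}}+e^{-1}}$, $c=\frac{\ln((1-\rho_2)/(1-\rho_1))}{\ln(\rho_1/\rho_2)+\ln((1-\rho_2)/(1-\rho_1))}$. Random walk: for $\rho,x\in[0,1]$ let $X_1(\rho,x),X_2(\rho,x),\dots$ be i.i.d. with $X_k=1-x$ w.p. $\rho$ and $X_k=-x$ w.p. $1-\rho$; $S_n(\rho,x)=\sum_{k=1}^nX_k(\rho,x)$;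 $N(\rho,x)=\inf\{n\ge1: S_n(\rho,x)<0\}$. Policy ${\sf PEAR}$: maintain counters $S,F$ (initially $0$) and $p_0=p$. At each time $t$: if $p_t\ge p$, recommend one popular and one niche item; if the niche item is chosen increment $S$, otherwise (popular item or outside option chosen) increment $F$. If $p_t<p$, recommend two popular items. Then set $p_{t+1}=\left(1+\frac{1-p}{p}\cdot\frac{\rho_2^S(1-\rho_2)^F}{\rho_1^S(1-\rho_1)^F}\right)^{-1}$. *)

theory Defs
  imports "HOL-Probability.Probability"
begin

definition rho1 :: "real \<Rightarrow> real \<Rightarrow> real" where
  "rho1 p VP = exp ((1 - p) / p) / (1 + exp VP + exp ((1 - p) / p))"

definition rho2 :: "real \<Rightarrow> real \<Rightarrow> real" where
  "rho2 p VP = exp (-1) / (1 + exp VP + exp (-1))"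

definition cconst :: "real \<Rightarrow> real \<Rightarrow> real" where
  "cconst p VP =
     ln ((1 - rho2 p VP) / (1 - rho1 p VP)) /
     (ln (rho1 p VP / rho2 p VP) + ln ((1 - rho2 p VP) / (1 - rho1 p VP)))"

definition first_time :: "(nat \<Rightarrow> bool) \<Rightarrow> enat" where
  "first_time P = (if \<exists>t. P t then enat (LEAST t. P t) else \<infinity>)"

text \<open>Noise realisation \<open>e t k\<close>: at time t, \<open>k = 0\<close> the popular item, \<open>k = 1\<close> the niche
  item, \<open>k = 2\<close> the outside option (when one popular and one niche item are shown).
  \<open>vN\<close> is the realised value of \<open>V_N\<close>.  The niche item is chosen iff its utility is
  strictly the largest (ties have probability zero).\<close>
definition niche_chosen :: "real \<Rightarrow> real \<Rightarrow> (nat \<Rightarrow> nat \<Rightarrow> real) \<Rightarrow> nat \<Rightarrow> bool" where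
  "niche_chosen VP vN e t \<longleftrightarrow> vN + e t 1 > VP + e t 0 \<and> vN + e t 1 > e t 2"

definition pear_post :: "real \<Rightarrow> real \<Rightarrow> nat \<times> nat \<Rightarrow> real" where
  "pear_post p VP SF = (case SF of (S, F) \<Rightarrow>
     inverse (1 + (1 - p) / p *
       ((rho2 p VP ^ S * (1 - rho2 p VP) ^ F) / (rho1 p VP ^ S * (1 - rho1 p VP) ^ F))))"

fun pear_state :: "real \<Rightarrow> real \<Rightarrow> real \<Rightarrow> (nat \<Rightarrow> nat \<Rightarrow> real) \<Rightarrow> nat \<Rightarrow> (nat \<times> nat) \<times> real" where
  "pear_state p VP vN e 0 = ((0, 0), p)"
| "pear_state p VP vN e (Suc t) =
     (case pear_state p VP vN e t of ((S, F), pt) \<Rightarrow>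
        let SF' = (if pt \<ge> p then (if niche_chosen VP vN e t then (S + 1, F) else (S, F + 1))
                   else (S, F))
        in (SF', pear_post p VP SF'))"

definition pear_p :: "real \<Rightarrow> real \<Rightarrow> real \<Rightarrow> (nat \<Rightarrow> nat \<Rightarrow> real) \<Rightarrow> nat \<Rightarrow> real" where
  "pear_p p VP vN e t = snd (pear_state p VP vN e t)"

definition pear_T :: "real \<Rightarrow> real \<Rightarrow> real \<Rightarrow> (nat \<Rightarrow> nat \<Rightarrow> real) \<Rightarrow> enat" where
  "pear_T p VP vN e = first_time (\<lambda>t. pear_p p VP vN e t < p)"

text \<open>Probability space of i.i.d. Bernoulli(rho) coin flips; flip k-1 determines X_k.\<close>
definition rw_space :: "real \<Rightarrow> bool stream measure" where
  "rw_space rho = stream_space (measure_pmf (bernoulli_pmf rho))"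

definition rw_S :: "real \<Rightarrow> bool stream \<Rightarrow> nat \<Rightarrow> real" where
  "rw_S x \<omega> n = (\<Sum>k<n. if \<omega> !! k then 1 - x else - x)"

definition rw_N :: "real \<Rightarrow> bool stream \<Rightarrow> enat" where
  "rw_N x \<omega> = first_time (\<lambda>n. n \<ge> 1 \<and> rw_S x \<omega> n < 0)"

end

theory Submission
  imports Defs
begin

text \<open>While \<open>p\<^sub>t \<ge> p\<close> the counters \<open>S, F\<close> record successes and failures of the niche item, and
  taking logarithms shows that \<open>p\<^sub>t \<ge> p\<close> is equivalent to \<open>S (1 - c) - F c \<ge> 0\<close>.  Hence \<open>T\<close> is,
  pathwise, the first time the walk with steps \<open>1 - c\<close> (niche chosen) and \<open>-c\<close> (otherwise) becomes
  negative, and \<open>p\<^sub>t\<close> is frozen from then on.  With Gumbel noise, \<open>exp (-(\<epsilon> + u + \<gamma>))\<close> is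
  exponential with rate \<open>exp u\<close>, so the choice is a race of exponential clocks and the niche item wins
  with the logit probability \<open>e\<^sup>v / (1 + e\<^sup>V\<^sup>P + e\<^sup>v)\<close> when \<open>V\<^sub>N = v\<close>, independently across
  times.  As \<open>V\<^sub>N\<close> is independent of the noise, conditionally on \<open>V\<^sub>N = v\<close> the choices form an
  i.i.d. Bernoulli stream with parameter \<open>\<rho>\<^sub>1\<close> or \<open>\<rho>\<^sub>2\<close>.\<close>

lemma first_time_eq_enat_iff: "first_time P = enat m \<longleftrightarrow> P m \<and> (\<forall>k<m. \<not> P k)"
proof
  assume "first_time P = enat m"
  then have "\<exists>t. P t" and "m = (LEAST t. P t)"
    unfolding first_time_def by (auto split: if_splits)
  then show "P m \<and> (\<forall>k<m. \<not> P k)" by (metis LeastI not_less_Least)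
next
  assume "P m \<and> (\<forall>k<m. \<not> P k)"
  then have "(LEAST t. P t) = m" by (metis Least_equality not_le)
  with \<open>P m \<and> _\<close> show "first_time P = enat m" unfolding first_time_def by auto
qed

lemma first_time_eq_infinity_iff: "first_time P = \<infinity> \<longleftrightarrow> (\<forall>k. \<not> P k)"
  unfolding first_time_def by auto

lemma enat_less_first_time_imp: "enat t < first_time P \<Longrightarrow> \<not> P t"
  unfolding first_time_def by (auto split: if_splits dest: not_less_Least)

lemma first_time_le_enat_imp:
  assumes "first_time P \<le> enat t"
  obtains t0 where "t0 \<le> t" "P t0"
  using assms unfolding first_time_def by (auto split: if_splits intro: LeastI)

lemma first_time_cong_until:
  assumes "\<And>t. (\<forall>s<t. \<not> Q s) \<Longrightarrow> P t \<longleftrightarrow> Q t"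
  shows "first_time P = first_time Q"
proof (cases "first_time Q")
  case (enat m)
  then have Q: "Q m" "\<forall>k<m. \<not> Q k" by (simp_all add: first_time_eq_enat_iff)
  have "\<not> P k" if "k < m" for k
    using assms[of k] Q(2) that by auto
  moreover have "P m" using assms[of m] Q by simp
  ultimately show ?thesis unfolding enat first_time_eq_enat_iff by blast
next
  case infinity
  then have "\<forall>k. \<not> Q k" by (simp add: first_time_eq_infinity_iff)
  then show ?thesis unfolding infinity first_time_eq_infinity_iff using assms by blast
qed

section \<open>The posterior of PEAR as a random walk\<close>

lemma rho2_pos: "0 < rho2 p VP"
  unfolding rho2_def by (simp add: add_pos_pos)

lemma rho1_less_1: "rho1 p VP < 1"
  unfolding rho1_def by (simp add: add_pos_pos)

lemma rho2_less_rho1: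
  assumes "0 < p"
  shows "rho2 p VP < rho1 p VP"
proof -
  let ?K = "1 + exp VP"
  have "exp (-1) < exp ((1 - p) / p)"
    using assms by (simp add: less_divide_eq)
  then have "exp (-1) * ?K < exp ((1 - p) / p) * ?K"
    by (simp add: add_pos_pos)
  then show ?thesis
    unfolding rho1_def rho2_def by (simp add: divide_simps add_pos_pos algebra_simps)
qed

lemma pear_post_0: "0 < p \<Longrightarrow> pear_post p VP (0, 0) = p"
  unfolding pear_post_def by (simp add: field_simps)

text \<open>Taking logarithms, \<open>p_t \<ge> p\<close> says that the likelihood ratio is at most \<open>1\<close>, i.e.
  \<open>S ln(\<rho>\<^sub>1/\<rho>\<^sub>2) \<ge> F ln((1-\<rho>\<^sub>2)/(1-\<rho>\<^sub>1))\<close>; dividing by the sum of the two logarithms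
  gives the linear form with slope \<open>c\<close>.\<close>
lemma pear_post_ge_iff:
  assumes p: "0 < p" "p < 1"
  shows "p \<le> pear_post p VP (S, F) \<longleftrightarrow> 0 \<le> real S * (1 - cconst p VP) - real F * cconst p VP"
proof -
  define r1 where "r1 = rho1 p VP"
  define r2 where "r2 = rho2 p VP"
  have r: "0 < r2" "r2 < r1" "r1 < 1"
    using rho2_pos rho2_less_rho1[OF p(1)] rho1_less_1 unfolding r1_def r2_def by auto
  define R where "R = (r2 ^ S * (1 - r2) ^ F) / (r1 ^ S * (1 - r1) ^ F)"
  define A where "A = ln (r1 / r2)"
  define B where "B = ln ((1 - r2) / (1 - r1))"
  have R: "R > 0" unfolding R_def using r by simp
  have AB: "A > 0" "B > 0" unfolding A_def B_def using r by simp_all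
  have lnR: "ln R = real F * B - real S * A"
    unfolding R_def A_def B_def using r by (simp add: ln_div ln_mult ln_realpow algebra_simps)
  have c: "cconst p VP = B / (A + B)"
    unfolding cconst_def A_def B_def r1_def r2_def by simp
  have "pear_post p VP (S, F) = 1 / (1 + (1 - p) / p * R)"
    unfolding pear_post_def R_def r1_def r2_def by (simp add: inverse_eq_divide)
  moreover have "0 < 1 + (1 - p) / p * R"
    using p R by (simp add: add_pos_nonneg)
  ultimately have "p \<le> pear_post p VP (S, F) \<longleftrightarrow> p * (1 + (1 - p) / p * R) \<le> 1"
    by (simp add: le_divide_eq)
  also have "p * (1 + (1 - p) / p * R) = p + (1 - p) * R"
    using p by (simp add: field_simps)
  also have "p + (1 - p) * R \<le> 1 \<longleftrightarrow> (1 - p) * R \<le> (1 - p) * 1"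
    by (simp add: algebra_simps)
  also have "\<dots> \<longleftrightarrow> ln R \<le> 0"
    using p R by simp
  also have "\<dots> \<longleftrightarrow> 0 \<le> (real S * A - real F * B) / (A + B)"
    using AB lnR by (simp add: zero_le_divide_iff)
  also have "(real S * A - real F * B) / (A + B) = real S * (1 - cconst p VP) - real F * cconst p VP"
  proof -
    have "1 - B / (A + B) = A / (A + B)"
      using AB by (simp add: field_simps)
    then show ?thesis
      unfolding c by (simp add: diff_divide_distrib)
  qed
  finally show ?thesis .
qed

definition successes :: "(nat \<Rightarrow> bool) \<Rightarrow> nat \<Rightarrow> nat" where
  "successes f t = (\<Sum>k<t. if f k then 1 else 0)"

definition failures :: "(nat \<Rightarrow> bool) \<Rightarrow> nat \<Rightarrow> nat" where
  "failures f t = (\<Sum>k<t. if f k then 0 else 1)"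

lemma rw_S_to_stream:
  "rw_S x (to_stream f) t = real (successes f t) * (1 - x) - real (failures f t) * x"
  unfolding rw_S_def successes_def failures_def to_stream_def
  by (induction t) (auto simp: algebra_simps)

lemma pear_state_while_walk_nonneg:
  assumes p: "0 < p" "p < 1"
    and nonneg: "\<forall>s<t. 0 \<le> rw_S (cconst p VP) (to_stream (niche_chosen VP vN e)) s"
  defines "f \<equiv> niche_chosen VP vN e"
  shows "pear_state p VP vN e t =
           ((successes f t, failures f t), pear_post p VP (successes f t, failures f t))"
  using nonneg
proof (induction t)
  case 0
  then show ?case using pear_post_0[OF p(1)] by (simp add: successes_def failures_def)
next
  case (Suc t)
  then have "p \<le> pear_post p VP (successes f t, failures f t)"
    using pear_post_ge_iff[OF p] rw_S_to_stream f_def by simp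
  with Suc show ?case by (simp add: successes_def failures_def f_def Let_def)
qed

lemma pear_p_eq_pear_post:
  "0 < p \<Longrightarrow> pear_p p VP vN e t = pear_post p VP (fst (pear_state p VP vN e t))"
  unfolding pear_p_def by (cases t) (auto simp: pear_post_0 Let_def split: prod.splits)

lemma pear_state_constant_after_drop:
  assumes "0 < p" "pear_p p VP vN e t0 < p" "t0 \<le> t"
  shows "pear_state p VP vN e t = pear_state p VP vN e t0"
  using \<open>t0 \<le> t\<close>
proof (induction t rule: dec_induct)
  case (step t)
  then show ?case
    using assms(1,2) pear_p_eq_pear_post[OF assms(1), of VP vN e t0]
    by (auto simp: pear_p_def Let_def split: prod.splits)
qed simp

lemma pear_T_eq_rw_N:
  assumes p: "0 < p" "p < 1"
  shows "pear_T p VP vN e = rw_N (cconst p VP) (to_stream (niche_chosen VP vN e))"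
  unfolding pear_T_def rw_N_def
proof (rule first_time_cong_until)
  fix t
  let ?f = "niche_chosen VP vN e"
  assume "\<forall>s<t. \<not> (1 \<le> s \<and> rw_S (cconst p VP) (to_stream ?f) s < 0)"
  have "0 \<le> rw_S (cconst p VP) (to_stream ?f) s" if "s < t" for s
    using that \<open>\<forall>s<t. _\<close> by (cases s) (auto simp: rw_S_def)
  then have "\<forall>s<t. 0 \<le> rw_S (cconst p VP) (to_stream ?f) s" by blast
  then have "pear_p p VP vN e t = pear_post p VP (successes ?f t, failures ?f t)"
    using pear_state_while_walk_nonneg[OF p] by (simp add: pear_p_def)
  then have "p \<le> pear_p p VP vN e t \<longleftrightarrow> 0 \<le> rw_S (cconst p VP) (to_stream ?f) t"
    using pear_post_ge_iff[OF p] rw_S_to_stream[of _ ?f t] by simp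
  then have "pear_p p VP vN e t < p \<longleftrightarrow> rw_S (cconst p VP) (to_stream ?f) t < 0"
    by linarith
  also have "\<dots> \<longleftrightarrow> 1 \<le> t \<and> rw_S (cconst p VP) (to_stream ?f) t < 0"
    by (cases t) (simp_all add: rw_S_def)
  finally show "pear_p p VP vN e t < p \<longleftrightarrow> 1 \<le> t \<and> rw_S (cconst p VP) (to_stream ?f) t < 0" .
qed

lemma pear_p_ge_before_pear_T:
  "enat t < pear_T p VP vN e \<Longrightarrow> p \<le> pear_p p VP vN e t"
  unfolding pear_T_def by (auto dest: enat_less_first_time_imp)

lemma pear_p_less_from_pear_T:
  assumes "0 < p" "pear_T p VP vN e \<le> enat t"
  shows "pear_p p VP vN e t < p"
proof -
  obtain t0 where "t0 \<le> t" "pear_p p VP vN e t0 < p"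
    using assms(2) unfolding pear_T_def by (rule first_time_le_enat_imp)
  with pear_state_constant_after_drop[OF assms(1) this(2) this(1)] show ?thesis
    by (simp add: pear_p_def)
qed

section \<open>Gumbel noise and the logit choice rule\<close>

lemma (in prob_space) prob_less_eq_cdf_of_isCont:
  fixes X :: "'a \<Rightarrow> real"
  assumes [measurable]: "X \<in> borel_measurable M"
    and cdf: "\<And>y. prob {\<omega> \<in> space M. X \<omega> \<le> y} = F y"
    and "isCont F x"
  shows "prob {\<omega> \<in> space M. X \<omega> < x} = F x"
proof -
  interpret D: real_distribution "distr M borel X" by simp
  have "cdf (distr M borel X) = F"
    using cdf by (simp add: fun_eq_iff cdf_def measure_distr vimage_def Int_def conj_commute)
  then have "measure (distr M borel X) {x} = 0"
    using D.isCont_cdf \<open>isCont F x\<close> by simp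
  then have "prob {\<omega> \<in> space M. X \<omega> = x} = 0"
    by (simp add: measure_distr vimage_def Int_def conj_commute)
  moreover have "{\<omega> \<in> space M. X \<omega> < x} = {\<omega> \<in> space M. X \<omega> \<le> x} - {\<omega> \<in> space M. X \<omega> = x}"
    by auto
  moreover have "prob ({\<omega> \<in> space M. X \<omega> \<le> x} - {\<omega> \<in> space M. X \<omega> = x})
      = prob {\<omega> \<in> space M. X \<omega> \<le> x} - prob {\<omega> \<in> space M. X \<omega> = x}"
    by (rule finite_measure_Diff) auto
  ultimately show ?thesis
    using cdf[of x] by simp
qed

definition gumbel_cdf :: "real \<Rightarrow> real" where
  "gumbel_cdf x = exp (- exp (- (x + euler_mascheroni)))"

text \<open>This turns the utility-maximising choice into a race of exponential clocks.\<close>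
lemma (in prob_space) exponential_distributed_of_gumbel:
  assumes [measurable]: "e \<in> borel_measurable M"
    and cdf: "\<And>x. prob {\<omega> \<in> space M. e \<omega> \<le> x} = gumbel_cdf x"
  shows "distributed M lborel (\<lambda>\<omega>. exp (- (e \<omega> + s + euler_mascheroni))) (exponential_density (exp s))"
proof (subst exponential_distributed_iff, safe)
  show "(\<lambda>\<omega>. exp (- (e \<omega> + s + euler_mascheroni))) \<in> borel_measurable M" by measurable
  fix a :: real
  assume "0 \<le> a"
  show "prob {\<omega> \<in> space M. exp (- (e \<omega> + s + euler_mascheroni)) \<le> a} = 1 - exp (- a * exp s)"
  proof (cases "a = 0")
    case True
    then show ?thesis by (simp add: not_le)
  next
    case False
    with \<open>0 \<le> a\<close> have "0 < a" by simp
    define x where "x = - ln a - s - euler_mascheroni"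
    have "exp (- (y + s + euler_mascheroni)) \<le> a \<longleftrightarrow> \<not> y < x" for y
      using \<open>0 < a\<close> unfolding x_def by (subst ln_ge_iff[symmetric]) auto
    then have "{\<omega> \<in> space M. exp (- (e \<omega> + s + euler_mascheroni)) \<le> a} =
               space M - {\<omega> \<in> space M. e \<omega> < x}"
      by auto
    moreover have "prob {\<omega> \<in> space M. e \<omega> < x} = gumbel_cdf x"
      by (rule prob_less_eq_cdf_of_isCont[OF assms(1) cdf])
        (unfold gumbel_cdf_def[abs_def], intro continuous_intros)
    moreover have "gumbel_cdf x = exp (- a * exp s)"
      unfolding gumbel_cdf_def x_def using \<open>0 < a\<close> by (simp add: exp_add exp_diff)
    ultimately show ?thesis
      by (simp add: prob_compl)
  qed
qed simp

lemma (in prob_space) prob_exponential_less: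
  assumes "0 < a" "0 < b"
    and X: "distributed M lborel X (exponential_density a)"
    and Y: "distributed M lborel Y (exponential_density b)"
    and "indep_var borel X borel Y"
  shows "prob {\<omega> \<in> space M. X \<omega> < Y \<omega>} = a / (a + b)"
proof -
  have [measurable]: "X \<in> borel_measurable M" "Y \<in> borel_measurable M"
    using X Y by (auto dest: distributed_measurable)
  have [measurable]: "{(x, y). x < y} \<in> sets (borel \<Otimes>\<^sub>M (borel :: real measure))"
  proof -
    have "{(x, y). x < y} = {z \<in> space (borel \<Otimes>\<^sub>M (borel :: real measure)). fst z < snd z}"
      by (auto simp: space_pair_measure)
    also have "\<dots> \<in> sets (borel \<Otimes>\<^sub>M (borel :: real measure))" by measurable
    finally show ?thesis .
  qed
  have distr_X: "distr M borel X = density lborel (exponential_density a)"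
    using distributed_distr_eq_density[OF X] by (simp cong: distr_cong)
  have tail_Y: "emeasure (distr M borel Y) {x<..} = ennreal (exp (- x * b))" if "0 \<le> x" for x
    using exponential_distributedD_gt[OF Y that \<open>0 < b\<close>]
    by (subst emeasure_distr) (auto simp: emeasure_eq_measure vimage_def Int_def conj_commute)
  have density_1: "(\<integral>\<^sup>+x. ennreal (exponential_density l x) \<partial>lborel) = 1" if "0 < l" for l
  proof -
    interpret D: prob_space "density lborel (exponential_density l)"
      using prob_space_exponential_density[OF that] .
    show ?thesis
      using D.emeasure_space_1 by (simp add: emeasure_density)
  qed
  interpret DY: prob_space "distr M borel Y" by (rule prob_space_distr) simp
  have "emeasure M {\<omega> \<in> space M. X \<omega> < Y \<omega>} =
        emeasure (distr M (borel \<Otimes>\<^sub>M borel) (\<lambda>\<omega>. (X \<omega>, Y \<omega>))) {(x, y). x < y}"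
    by (subst emeasure_distr) (auto intro!: arg_cong[where f="emeasure M"])
  also have "\<dots> = emeasure (distr M borel X \<Otimes>\<^sub>M distr M borel Y) {(x, y). x < y}"
    using \<open>indep_var borel X borel Y\<close> by (simp add: indep_var_distribution_eq)
  also have "\<dots> = (\<integral>\<^sup>+x. emeasure (distr M borel Y) (Pair x -` {(x, y). x < y}) \<partial>distr M borel X)"
    by (rule DY.emeasure_pair_measure_alt) simp
  also have "\<dots> = (\<integral>\<^sup>+x. ennreal (exponential_density a x) * emeasure (distr M borel Y) {x<..} \<partial>lborel)"
    unfolding distr_X by (subst nn_integral_density) (auto simp: vimage_def greaterThan_def)
  also have "\<dots> = (\<integral>\<^sup>+x. ennreal (a / (a + b)) * ennreal (exponential_density (a + b) x) \<partial>lborel)"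
  proof (rule nn_integral_cong)
    fix x :: real
    show "ennreal (exponential_density a x) * emeasure (distr M borel Y) {x<..} =
          ennreal (a / (a + b)) * ennreal (exponential_density (a + b) x)"
    proof (cases "x < 0")
      case False
      have "a * exp (- x * a) * exp (- x * b) = a / (a + b) * ((a + b) * exp (- x * (a + b)))"
        using assms(1,2) by (simp add: field_simps mult_exp_exp)
      then show ?thesis
        using False tail_Y[of x] assms(1,2)
        by (simp add: exponential_density_def ennreal_mult[symmetric])
    qed (simp add: exponential_density_def)
  qed
  also have "\<dots> = ennreal (a / (a + b))"
    using assms(1,2) by (simp add: nn_integral_cmult density_1)
  finally show ?thesis
    using assms(1,2) by (simp add: emeasure_eq_measure)
qed

lemma (in prob_space) prob_logit_choice:
  fixes E :: "nat \<Rightarrow> 'a \<Rightarrow> real" and u :: "nat \<Rightarrow> real"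
  assumes indep: "indep_vars (\<lambda>_. borel) E {0, 1, 2}"
    and cdf: "\<And>k x. k \<in> {0, 1, 2} \<Longrightarrow> prob {\<omega> \<in> space M. E k \<omega> \<le> x} = gumbel_cdf x"
  shows "prob {\<omega> \<in> space M. u 1 + E 1 \<omega> > u 0 + E 0 \<omega> \<and> u 1 + E 1 \<omega> > u 2 + E 2 \<omega>}
         = exp (u 1) / (exp (u 0) + exp (u 1) + exp (u 2))"
proof -
  define W where "W k \<omega> = exp (- (E k \<omega> + u k + euler_mascheroni))" for k \<omega>
  let ?W02 = "\<lambda>\<omega>. Min ((\<lambda>k. W k \<omega>) ` {0, 2})"
  have [measurable]: "E k \<in> borel_measurable M" if "k \<in> {0, 1, 2}" for k
    using indep that unfolding indep_vars_def by auto
  have indep_W: "indep_vars (\<lambda>_. borel) W {0, 1, 2}"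
    unfolding W_def
    by (rule indep_vars_compose2[OF indep, where Y="\<lambda>k x. exp (- (x + u k + euler_mascheroni))"]) auto
  have W: "distributed M lborel (W k) (exponential_density (exp (u k)))" if "k \<in> {0, 1, 2}" for k
    unfolding W_def using exponential_distributed_of_gumbel cdf[OF that] that by simp
  have "distributed M lborel ?W02 (exponential_density (\<Sum>k\<in>{0, 2}. exp (u k)))"
    by (rule exponential_distributed_Min) (auto intro: W indep_vars_subset[OF indep_W])
  moreover have "indep_var borel (W 1) borel ?W02"
    using indep_vars_Min[of "{0, 2}" 1 W] indep_W by (simp add: insert_commute)
  ultimately have "prob {\<omega> \<in> space M. W 1 \<omega> < ?W02 \<omega>} = exp (u 1) / (exp (u 1) + (exp (u 0) + exp (u 2)))"
    using prob_exponential_less[of "exp (u 1)" "exp (u 0) + exp (u 2)" "W 1" ?W02] W[of 1]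
    by (simp add: add_pos_pos)
  moreover have "{\<omega> \<in> space M. W 1 \<omega> < ?W02 \<omega>} =
      {\<omega> \<in> space M. u 1 + E 1 \<omega> > u 0 + E 0 \<omega> \<and> u 1 + E 1 \<omega> > u 2 + E 2 \<omega>}"
    by (auto simp: W_def)
  ultimately show ?thesis
    by (simp add: algebra_simps)
qed

lemma (in prob_space) distr_eq_bernoulli_pmf:
  assumes X: "X \<in> measurable M (count_space UNIV)"
    and prob_X: "prob {\<omega> \<in> space M. X \<omega>} = \<rho>" and "0 \<le> \<rho>" "\<rho> \<le> 1"
  shows "distr M (measure_pmf (bernoulli_pmf \<rho>)) X = measure_pmf (bernoulli_pmf \<rho>)"
proof (rule measure_eqI_countable[where A=UNIV])
  fix b :: bool
  have "{\<omega> \<in> space M. X \<omega>} \<in> events"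
    using measurable_sets[OF X, of "{True}"] by (simp add: vimage_def Int_def conj_commute)
  moreover have "X -` {b} \<inter> space M =
      (if b then {\<omega> \<in> space M. X \<omega>} else space M - {\<omega> \<in> space M. X \<omega>})"
    by auto
  ultimately have "prob (X -` {b} \<inter> space M) = (if b then \<rho> else 1 - \<rho>)"
    using prob_X by (simp add: prob_compl)
  then show "emeasure (distr M (measure_pmf (bernoulli_pmf \<rho>)) X) {b} =
             emeasure (measure_pmf (bernoulli_pmf \<rho>)) {b}"
    using X assms(3,4)
    by (subst emeasure_distr) (auto simp: emeasure_eq_measure emeasure_pmf_single
        cong: measurable_cong_sets)
qed simp_all

lemma (in prob_space) distr_to_stream_iid:
  assumes indep: "indep_vars (\<lambda>_. N) Z UNIV"
    and distr_Z: "\<And>t. distr M N (Z t) = N"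
  shows "distr M (stream_space N) (\<lambda>\<omega>. to_stream (\<lambda>t. Z t \<omega>)) = stream_space N"
proof -
  have Z[measurable]: "Z t \<in> measurable M N" for t
    using indep by (auto simp: indep_vars_def)
  have "distr M (\<Pi>\<^sub>M t\<in>UNIV. N) (\<lambda>\<omega>. \<lambda>t\<in>UNIV. Z t \<omega>) = (\<Pi>\<^sub>M t\<in>UNIV. distr M N (Z t))"
    using indep_vars_iff_distr_eq_PiM[where I=UNIV and M'="\<lambda>_. N" and X=Z] indep by simp
  then have distr_Pi: "distr M (\<Pi>\<^sub>M t\<in>UNIV. N) (\<lambda>\<omega> t. Z t \<omega>) = (\<Pi>\<^sub>M t\<in>UNIV. N)"
    by (simp add: distr_Z restrict_UNIV)
  have Pi[measurable]: "(\<lambda>\<omega> t. Z t \<omega>) \<in> measurable M (\<Pi>\<^sub>M t\<in>UNIV. N)"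
    by (rule measurable_PiM_single') (auto intro: measurable_space[OF Z])
  have "distr M (stream_space N) (\<lambda>\<omega>. to_stream (\<lambda>t. Z t \<omega>))
        = distr (distr M (\<Pi>\<^sub>M t\<in>UNIV. N) (\<lambda>\<omega> t. Z t \<omega>)) (stream_space N) to_stream"
    by (subst distr_distr) (auto simp: comp_def)
  also have "\<dots> = stream_space N"
    unfolding distr_Pi by (rule stream_space_eq_distr[symmetric])
  finally show ?thesis .
qed

lemma measurable_rw_S[measurable]:
  "(\<lambda>s. rw_S x s n) \<in> borel_measurable (stream_space (measure_pmf q))"
proof -
  have [measurable]: "(\<lambda>s. s !! k) \<in> measurable (stream_space (measure_pmf q)) (count_space UNIV)" for k
    using measurable_snth[of k "measure_pmf q"] by (simp cong: measurable_cong_sets)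
  show ?thesis
    unfolding rw_S_def by measurable
qed

lemma sets_rw_N_eq:
  "{s \<in> space (stream_space (measure_pmf q)). rw_N x s = n} \<in> sets (stream_space (measure_pmf q))"
proof (cases n)
  case (enat m)
  have "{s \<in> space (stream_space (measure_pmf q)). rw_N x s = n} =
        {s \<in> space (stream_space (measure_pmf q)).
           (1 \<le> m \<and> rw_S x s m < 0) \<and> (\<forall>k<m. \<not> (1 \<le> k \<and> rw_S x s k < 0))}"
    unfolding rw_N_def enat first_time_eq_enat_iff ..
  also have "\<dots> \<in> sets (stream_space (measure_pmf q))" by measurable
  finally show ?thesis .
next
  case infinity
  have "{s \<in> space (stream_space (measure_pmf q)). rw_N x s = n} =
        {s \<in> space (stream_space (measure_pmf q)). \<forall>k. \<not> (1 \<le> k \<and> rw_S x s k < 0)}"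
    unfolding rw_N_def infinity first_time_eq_infinity_iff ..
  also have "\<dots> \<in> sets (stream_space (measure_pmf q))" by measurable
  finally show ?thesis .
qed

lemma measurable_niche_chosen_component:
  assumes "Some ` ({t} \<times> {..<3}) \<subseteq> I"
  shows "(\<lambda>h. niche_chosen VP v (\<lambda>t k. h (Some (t, k))) t)
           \<in> measurable (\<Pi>\<^sub>M i\<in>I. (borel :: real measure)) (measure_pmf q)"
proof -
  have [measurable]: "(\<lambda>h. h (Some (t, k))) \<in> borel_measurable (\<Pi>\<^sub>M i\<in>I. (borel :: real measure))"
    if "k < 3" for k
    using assms that by (intro measurable_component_singleton) auto
  have "(\<lambda>h. niche_chosen VP v (\<lambda>t k. h (Some (t, k))) t)
          \<in> measurable (\<Pi>\<^sub>M i\<in>I. (borel :: real measure)) (count_space UNIV)"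
    unfolding niche_chosen_def by measurable
  then show ?thesis
    by (simp cong: measurable_cong_sets)
qed

locale gumbel_choice_model = prob_space M for M :: "'a measure" +
  fixes VN :: "'a \<Rightarrow> real" and eps :: "nat \<Rightarrow> nat \<Rightarrow> 'a \<Rightarrow> real"
  assumes indep_VN_eps: "indep_vars (\<lambda>_. borel) (\<lambda>i. case i of None \<Rightarrow> VN | Some (t, k) \<Rightarrow> eps t k)
      ({None} \<union> Some ` (UNIV \<times> {..<3}))"
    and eps_gumbel: "\<And>t k x. k < 3 \<Longrightarrow> prob {\<omega> \<in> space M. eps t k \<omega> \<le> x} = gumbel_cdf x"
begin

abbreviation noise :: "(nat \<times> nat) option \<Rightarrow> 'a \<Rightarrow> real" where
  "noise \<equiv> \<lambda>i. case i of None \<Rightarrow> VN | Some (t, k) \<Rightarrow> eps t k"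

abbreviation chosen :: "real \<Rightarrow> real \<Rightarrow> 'a \<Rightarrow> nat \<Rightarrow> bool" where
  "chosen VP v \<omega> \<equiv> niche_chosen VP v (\<lambda>t k. eps t k \<omega>)"

lemma measurable_eps[measurable]: "k < 3 \<Longrightarrow> eps t k \<in> borel_measurable M"
  using indep_VN_eps unfolding indep_vars_def by fastforce

lemma indep_eps: "indep_vars (\<lambda>_. borel) (eps t) {0, 1, 2}"
proof -
  have "indep_vars (\<lambda>k. \<Pi>\<^sub>M i\<in>{Some (t, k)}. borel) (\<lambda>k \<omega>. restrict (\<lambda>i. noise i \<omega>) {Some (t, k)})
          {0, 1, 2 :: nat}"
    by (rule indep_vars_restrict[OF indep_VN_eps]) (auto simp: disjoint_family_on_def)
  then have "indep_vars (\<lambda>_. borel)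
      (\<lambda>k \<omega>. (\<lambda>h. h (Some (t, k))) (restrict (\<lambda>i. noise i \<omega>) {Some (t, k)})) {0, 1, 2 :: nat}"
    by (rule indep_vars_compose2) (rule measurable_component_singleton, simp)
  then show ?thesis
    by simp
qed

lemma prob_niche_chosen: "prob {\<omega> \<in> space M. chosen VP v \<omega> t} = exp v / (1 + exp VP + exp v)"
proof -
  have "prob {\<omega> \<in> space M. eps t k \<omega> \<le> x} = gumbel_cdf x" if "k \<in> {0, 1, 2}" for k x
    using eps_gumbel that by auto
  from prob_logit_choice[OF indep_eps this, where u="\<lambda>k. if k = 0 then VP else if k = 1 then v else 0"]
  show ?thesis
    by (simp add: niche_chosen_def add_ac)
qed

lemma indep_niche_chosen:
  "indep_vars (\<lambda>_. measure_pmf q) (\<lambda>t \<omega>. chosen VP v \<omega> t) UNIV"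
proof -
  let ?K = "\<lambda>t. Some ` ({t} \<times> {..<3})"
  have "indep_vars (\<lambda>t. \<Pi>\<^sub>M i\<in>?K t. borel) (\<lambda>t \<omega>. restrict (\<lambda>i. noise i \<omega>) (?K t)) UNIV"
    by (rule indep_vars_restrict[OF indep_VN_eps]) (auto simp: disjoint_family_on_def)
  then have "indep_vars (\<lambda>_. measure_pmf q)
      (\<lambda>t \<omega>. (\<lambda>h. niche_chosen VP v (\<lambda>t k. h (Some (t, k))) t) (restrict (\<lambda>i. noise i \<omega>) (?K t))) UNIV"
    by (rule indep_vars_compose2) (rule measurable_niche_chosen_component, simp)
  then show ?thesis
    by (simp add: niche_chosen_def)
qed

lemma indep_VN_eq_choice_stream_mem:
  assumes "S \<in> sets (stream_space (measure_pmf q))"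
  shows "indep_var (count_space UNIV) (\<lambda>\<omega>. VN \<omega> = w)
           (count_space UNIV) (\<lambda>\<omega>. to_stream (chosen VP v \<omega>) \<in> S)"
proof -
  let ?I = "Some ` (UNIV \<times> {..<3})"
  have "indep_var (\<Pi>\<^sub>M i\<in>{None}. borel) (\<lambda>\<omega>. restrict (\<lambda>i. noise i \<omega>) {None})
                  (\<Pi>\<^sub>M i\<in>?I. borel) (\<lambda>\<omega>. restrict (\<lambda>i. noise i \<omega>) ?I)"
    by (rule indep_var_restrict[OF indep_VN_eps]) auto
  then have "indep_var (count_space UNIV) ((\<lambda>h. h None = w) \<circ> (\<lambda>\<omega>. restrict (\<lambda>i. noise i \<omega>) {None}))
     (count_space UNIV)
     ((\<lambda>h. to_stream (\<lambda>t. niche_chosen VP v (\<lambda>t k. h (Some (t, k))) t) \<in> S) \<circ>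
      (\<lambda>\<omega>. restrict (\<lambda>i. noise i \<omega>) ?I))"
  proof (rule indep_var_compose)
    have [measurable]: "(\<lambda>h. h None) \<in> borel_measurable (\<Pi>\<^sub>M i\<in>{None}. (borel :: real measure))"
      by (rule measurable_component_singleton) simp
    show "(\<lambda>h. h None = w) \<in> measurable (\<Pi>\<^sub>M i\<in>{None}. borel) (count_space UNIV)"
      by measurable
    have "(\<lambda>h t. niche_chosen VP v (\<lambda>t k. h (Some (t, k))) t)
            \<in> measurable (\<Pi>\<^sub>M i\<in>?I. borel) (\<Pi>\<^sub>M t\<in>UNIV. measure_pmf q)"
      by (intro measurable_PiM_single' measurable_niche_chosen_component
          measurable_space[OF measurable_niche_chosen_component]) auto
    then have "(\<lambda>h. to_stream (\<lambda>t. niche_chosen VP v (\<lambda>t k. h (Some (t, k))) t))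
                 \<in> measurable (\<Pi>\<^sub>M i\<in>?I. borel) (stream_space (measure_pmf q))"
      using measurable_to_stream by (rule measurable_compose)
    then show "(\<lambda>h. to_stream (\<lambda>t. niche_chosen VP v (\<lambda>t k. h (Some (t, k))) t) \<in> S)
                 \<in> measurable (\<Pi>\<^sub>M i\<in>?I. borel) (count_space UNIV)"
      by (rule pred_sets2[OF assms])
  qed
  then show ?thesis
    by (simp add: comp_def niche_chosen_def[abs_def])
qed

lemma prob_pear_T_eq_and_VN_eq:
  fixes p VP v :: real
  assumes "0 < p" "p < 1"
  defines "\<rho> \<equiv> exp v / (1 + exp VP + exp v)"
  shows "prob {\<omega> \<in> space M. pear_T p VP (VN \<omega>) (\<lambda>t k. eps t k \<omega>) = n \<and> VN \<omega> = v}
       = prob {\<omega> \<in> space M. VN \<omega> = v} *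
         measure (rw_space \<rho>) {s \<in> space (rw_space \<rho>). rw_N (cconst p VP) s = n}"
proof -
  let ?B = "measure_pmf (bernoulli_pmf \<rho>)"
  define Zs where "Zs \<omega> = to_stream (chosen VP v \<omega>)" for \<omega>
  define Sn where "Sn = {s \<in> space (stream_space ?B). rw_N (cconst p VP) s = n}"
  have Sn: "Sn \<in> sets (stream_space ?B)"
    unfolding Sn_def by (rule sets_rw_N_eq)
  have "0 \<le> \<rho>" "\<rho> \<le> 1"
    unfolding \<rho>_def by (auto simp: divide_simps add_pos_pos)
  moreover have "(\<lambda>\<omega>. chosen VP v \<omega> t) \<in> measurable M (count_space UNIV)" for t
    unfolding niche_chosen_def by measurable
  ultimately have "distr M ?B (\<lambda>\<omega>. chosen VP v \<omega> t) = ?B" for t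
    using distr_eq_bernoulli_pmf prob_niche_chosen unfolding \<rho>_def by blast
  then have distr_Zs: "distr M (stream_space ?B) Zs = stream_space ?B"
    unfolding Zs_def by (intro distr_to_stream_iid indep_niche_chosen)
  have "Zs \<in> measurable M (stream_space ?B)"
    using indep_niche_chosen[of "bernoulli_pmf \<rho>" VP v] unfolding Zs_def indep_vars_def
    by (intro measurable_compose[OF _ measurable_to_stream] measurable_PiM_single')
       (auto intro: measurable_space)
  then have prob_Zs: "prob {\<omega> \<in> space M. Zs \<omega> \<in> Sn} = measure (stream_space ?B) Sn"
    using measure_distr[OF _ Sn, of Zs M] distr_Zs by (simp add: vimage_def Int_def conj_commute)
  txt \<open>On the event \<open>V\<^sub>N = v\<close>, \<open>T\<close> is a function of the choice stream computed with the constant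
    \<open>v\<close>, and that stream is independent of \<open>V\<^sub>N\<close>.\<close>
  have "pear_T p VP v (\<lambda>t k. eps t k \<omega>) = n \<longleftrightarrow> Zs \<omega> \<in> Sn" for \<omega>
    unfolding pear_T_eq_rw_N[OF assms(1,2)] Zs_def Sn_def by (simp add: space_stream_space)
  then have "{\<omega> \<in> space M. pear_T p VP (VN \<omega>) (\<lambda>t k. eps t k \<omega>) = n \<and> VN \<omega> = v}
      = (\<lambda>\<omega>. (VN \<omega> = v, Zs \<omega> \<in> Sn)) -` ({True} \<times> {True}) \<inter> space M"
    by auto
  also have "prob \<dots> = prob {\<omega> \<in> space M. VN \<omega> = v} * prob {\<omega> \<in> space M. Zs \<omega> \<in> Sn}"
    using indep_varD[OF indep_VN_eq_choice_stream_mem[OF Sn, where w=v], where Xa="{True}" and Xb="{True}"]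
    by (simp add: Zs_def vimage_def Int_def conj_commute)
  finally show ?thesis
    unfolding prob_Zs by (simp add: rw_space_def Sn_def)
qed

end

theorem lemma1:
  fixes M :: "'a measure" and p VP :: real
    and VN :: "'a \<Rightarrow> real" and eps :: "nat \<Rightarrow> nat \<Rightarrow> 'a \<Rightarrow> real"
  assumes "prob_space M"
    and "0 < p" and "p < 1" and "0 \<le> VP"
    and "prob_space.indep_vars M (\<lambda>_. borel)
           (\<lambda>i. case i of None \<Rightarrow> VN | Some (t, k) \<Rightarrow> eps t k)
           ({None} \<union> Some ` (UNIV \<times> {..<3}))"
    and "\<And>t k x. k < 3 \<Longrightarrow>
           measure M {\<omega> \<in> space M. eps t k \<omega> \<le> x} = exp (- exp (- (x + euler_mascheroni)))"
    and "measure M {\<omega> \<in> space M. VN \<omega> = (1 - p) / p} = p"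
    and "measure M {\<omega> \<in> space M. VN \<omega> = -1} = 1 - p"
  shows "(\<forall>n::enat.
            measure M {\<omega> \<in> space M. pear_T p VP (VN \<omega>) (\<lambda>t k. eps t k \<omega>) = n \<and> VN \<omega> = (1 - p) / p}
              / measure M {\<omega> \<in> space M. VN \<omega> = (1 - p) / p}
            = measure (rw_space (rho1 p VP))
                {\<omega> \<in> space (rw_space (rho1 p VP)). rw_N (cconst p VP) \<omega> = n})
       \<and> (\<forall>n::enat.
            measure M {\<omega> \<in> space M. pear_T p VP (VN \<omega>) (\<lambda>t k. eps t k \<omega>) = n \<and> VN \<omega> = -1}
              / measure M {\<omega> \<in> space M. VN \<omega> = -1}
            = measure (rw_space (rho2 p VP))
                {\<omega> \<in> space (rw_space (rho2 p VP)). rw_N (cconst p VP) \<omega> = n})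
       \<and> (\<forall>\<omega> \<in> space M. \<forall>t::nat.
            (enat t < pear_T p VP (VN \<omega>) (\<lambda>t k. eps t k \<omega>) \<longrightarrow> pear_p p VP (VN \<omega>) (\<lambda>t k. eps t k \<omega>) t \<ge> p)
          \<and> (pear_T p VP (VN \<omega>) (\<lambda>t k. eps t k \<omega>) \<le> enat t \<longrightarrow> pear_p p VP (VN \<omega>) (\<lambda>t k. eps t k \<omega>) t < p))"
proof -
  interpret gumbel_choice_model M VN eps
    using assms(1,5,6)
    by (intro gumbel_choice_model.intro gumbel_choice_model_axioms.intro) (simp_all add: gumbel_cdf_def)
  have conditional:
    "prob {\<omega> \<in> space M. pear_T p VP (VN \<omega>) (\<lambda>t k. eps t k \<omega>) = n \<and> VN \<omega> = v}
       / prob {\<omega> \<in> space M. VN \<omega> = v}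
     = measure (rw_space (exp v / (1 + exp VP + exp v)))
         {s \<in> space (rw_space (exp v / (1 + exp VP + exp v))). rw_N (cconst p VP) s = n}"
    if "prob {\<omega> \<in> space M. VN \<omega> = v} \<noteq> 0" for v n
    using prob_pear_T_eq_and_VN_eq[OF assms(2,3), where v=v and n=n] that by simp
  show ?thesis
    using conditional[of "(1 - p) / p"] conditional[of "-1"] assms(2,3,7,8)
      pear_p_ge_before_pear_T pear_p_less_from_pear_T[OF assms(2)]
    by (simp add: rho1_def rho2_def)
qed

end
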